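(* Consider a system in which all tasks have the same period, $\tau_X=\tau$ for all $X\in S$. If the system is strictly feasible, then it is fulfilled by the Greedy Maximizer policy.
   Context: A system consists of a finite set $S$ of tasks. Time is slotted, $t\in\{0,1,2,\dots\}$. Each task $X\in S$ has a period $\tau_X$ (a positive integer); time is partitioned into consecutive periods of $X$ of $\tau_X$ slots each, the first starting at $t=0$, and in each period $X$ has one job, removed at the end of the period. Let $T=\mathrm{lcm}\{\tau_X : X\in S\}$; time is partitioned into consecutive frames of $T$ slots each, the $k$-th frame ($k=1,2,\dots$) being the $k$-th such block starting from $t=0$. A scheduling policy chooses in each slot either to idle or to execute the job of exactly one task. Each task $X$ has rewards $r^1_X\ge r^2_X\ge\dots\ge r^{\tau_X}_X\ge 0$: executing the job of $X$ for the $i$-th time within a period yields reward $r^i_X$ to $X$. Let $s_X(t)$ be the total reward obtained by $X$ between time 0 and $t$; the average reward is $q_X=\liminf_{t\to\infty}s_X(t)/(t/T)$. Each task has a minimum requirement $q^*_X>0$; a policy fulfills the system if $q_X\ge q^*_X$ with probability 1 for all $X\in S$. The system is feasible if some policy fulfills it, and strictly feasible if there is $\epsilon>0$ such that the same system with requirements $[(1+\epsilon)q^*_X]$ is feasible. Let $\tilde q_X(k)$ be the total reward obtained by $X$ during the $k$-th frame. The debt of $X$ is $d_X(0)=0$, $d_X(k)=[d_X(k-1)+q^*_X-\tilde q_X(k)]^+$ for $k>0$, with $[x]^+=\max\{x,0\}$. The Greedy Maximizer policy is the following: at the start of each frame the debts are updated by the recursion above (initially all debts are $0$); during the frame, in each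 time slot, letting $i_X$ denote the number of times the job of $X$ has already been executed in its current period (reset to $0$ at the start of each period of $X$), the policy executes the job of a task $Y\in S$ maximizing $r^{i_Y+1}_Y\,d_Y$ over $X\in S$ (using the current debts $d_X$), with ties broken arbitrarily. *)

theory Defs
  imports "HOL-Probability.Probability"
begin

text \<open>Tasks have type 'x; the system is a finite set S of tasks.
  tau X is the period of X, r X i is the reward r^i_X (meaningful for 1 \<le> i \<le> tau X),
  q X is the requirement q^*_X. A schedule is a sequence sch :: nat \<Rightarrow> 'x option,
  where sch t = Some X means the job of X is executed in slot t and None means idle.\<close>

definition exec_before :: "('x \<Rightarrow> nat) \<Rightarrow> (nat \<Rightarrow> 'x option) \<Rightarrow> 'x \<Rightarrow> nat \<Rightarrow> nat" where
  "exec_before tau sch X t =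
     card {s. (t div tau X) * tau X \<le> s \<and> s < t \<and> sch s = Some X}"

definition slot_reward :: "('x \<Rightarrow> nat) \<Rightarrow> ('x \<Rightarrow> nat \<Rightarrow> real) \<Rightarrow> (nat \<Rightarrow> 'x option) \<Rightarrow> 'x \<Rightarrow> nat \<Rightarrow> real" where
  "slot_reward tau r sch X t =
     (if sch t = Some X then r X (exec_before tau sch X t + 1) else 0)"

definition cum_reward :: "('x \<Rightarrow> nat) \<Rightarrow> ('x \<Rightarrow> nat \<Rightarrow> real) \<Rightarrow> (nat \<Rightarrow> 'x option) \<Rightarrow> 'x \<Rightarrow> nat \<Rightarrow> real" where
  "cum_reward tau r sch X t = (\<Sum>s<t. slot_reward tau r sch X s)"

definition frame_len :: "'x set \<Rightarrow> ('x \<Rightarrow> nat) \<Rightarrow> nat" where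
  "frame_len S tau = Lcm (tau ` S)"

definition avg_reward :: "'x set \<Rightarrow> ('x \<Rightarrow> nat) \<Rightarrow> ('x \<Rightarrow> nat \<Rightarrow> real) \<Rightarrow> (nat \<Rightarrow> 'x option) \<Rightarrow> 'x \<Rightarrow> ereal" where
  "avg_reward S tau r sch X =
     liminf (\<lambda>t. ereal (cum_reward tau r sch X t / (real t / real (frame_len S tau))))"

definition frame_reward :: "'x set \<Rightarrow> ('x \<Rightarrow> nat) \<Rightarrow> ('x \<Rightarrow> nat \<Rightarrow> real) \<Rightarrow> (nat \<Rightarrow> 'x option) \<Rightarrow> 'x \<Rightarrow> nat \<Rightarrow> real" where
  "frame_reward S tau r sch X k =
     (\<Sum>s\<in>{(k - 1) * frame_len S tau ..< k * frame_len S tau}. slot_reward tau r sch X s)"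

primrec debt :: "'x set \<Rightarrow> ('x \<Rightarrow> nat) \<Rightarrow> ('x \<Rightarrow> nat \<Rightarrow> real) \<Rightarrow> ('x \<Rightarrow> real) \<Rightarrow> (nat \<Rightarrow> 'x option) \<Rightarrow> 'x \<Rightarrow> nat \<Rightarrow> real" where
  "debt S tau r q sch X 0 = 0"
| "debt S tau r q sch X (Suc k) =
     max 0 (debt S tau r q sch X k + q X - frame_reward S tau r sch X (Suc k))"

definition valid_schedule :: "'x set \<Rightarrow> (nat \<Rightarrow> 'x option) \<Rightarrow> bool" where
  "valid_schedule S sch \<longleftrightarrow> (\<forall>t X. sch t = Some X \<longrightarrow> X \<in> S)"

definition meets_requirements :: "'x set \<Rightarrow> ('x \<Rightarrow> nat) \<Rightarrow> ('x \<Rightarrow> nat \<Rightarrow> real) \<Rightarrow> ('x \<Rightarrow> real) \<Rightarrow> (nat \<Rightarrow> 'x option) \<Rightarrow> bool" where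
  "meets_requirements S tau r q sch \<longleftrightarrow> (\<forall>X\<in>S. avg_reward S tau r sch X \<ge> ereal (q X))"

text \<open>Feasibility: some (possibly randomized, history dependent) policy fulfills the system
  with probability 1. Since the system itself is deterministic, a policy is represented by the
  probability distribution it induces on schedules.\<close>
definition feasible :: "'x set \<Rightarrow> ('x \<Rightarrow> nat) \<Rightarrow> ('x \<Rightarrow> nat \<Rightarrow> real) \<Rightarrow> ('x \<Rightarrow> real) \<Rightarrow> bool" where
  "feasible S tau r q \<longleftrightarrow>
     (\<exists>M :: (nat \<Rightarrow> 'x option) measure. prob_space M \<and>
        (AE sch in M. valid_schedule S sch \<and> meets_requirements S tau r q sch))"

definition strictly_feasible :: "'x set \<Rightarrow> ('x \<Rightarrow> nat) \<Rightarrow> ('x \<Rightarrow> nat \<Rightarrow> real) \<Rightarrow> ('x \<Rightarrow> real) \<Rightarrow> bool" where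
  "strictly_feasible S tau r q \<longleftrightarrow> (\<exists>\<epsilon>>0. feasible S tau r (\<lambda>X. (1 + \<epsilon>) * q X))"

text \<open>A schedule produced by the Greedy Maximizer (for some tie-breaking): in every slot t it
  executes a task Y in S maximizing r^{i_Y+1}_Y d_Y, with the debts of the current frame,
  i.e. d(k) during frame k+1 (slots kT, ..., (k+1)T-1).\<close>
definition greedy_maximizer :: "'x set \<Rightarrow> ('x \<Rightarrow> nat) \<Rightarrow> ('x \<Rightarrow> nat \<Rightarrow> real) \<Rightarrow> ('x \<Rightarrow> real) \<Rightarrow> (nat \<Rightarrow> 'x option) \<Rightarrow> bool" where
  "greedy_maximizer S tau r q sch \<longleftrightarrow>
     (\<forall>t. \<exists>Y\<in>S. sch t = Some Y \<and>
        (\<forall>X\<in>S. r X (exec_before tau sch X t + 1) * debt S tau r q sch X (t div frame_len S tau)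
               \<le> r Y (exec_before tau sch Y t + 1) * debt S tau r q sch Y (t div frame_len S tau)))"

definition fulfilled_by_GM :: "'x set \<Rightarrow> ('x \<Rightarrow> nat) \<Rightarrow> ('x \<Rightarrow> nat \<Rightarrow> real) \<Rightarrow> ('x \<Rightarrow> real) \<Rightarrow> bool" where
  "fulfilled_by_GM S tau r q \<longleftrightarrow>
     (\<forall>sch. greedy_maximizer S tau r q sch \<longrightarrow> meets_requirements S tau r q sch)"

end

theory Submission
  imports Defs
begin

text \<open>With a common period the frame is a single period, so during frame k+1 the Greedy
  Maximizer greedily fills one period with the non-increasing marginal weights d_X(k) r^i_X; an
  exchange argument shows that this maximizes the debt-weighted frame reward
  \<Sum>_X d_X(k) \<tilde>q_X over all ways of filling a period. A strictly feasible system has a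
  schedule whose frame rewards average at least (1 + \<delta>) q^*_X over some horizon of K
  frames, so averaging over those K frames gives the drift
  \<Sum>_X d_X(k) \<tilde>q_X(k+1) \<ge> (1 + \<delta>) \<Sum>_X d_X(k) q^*_X.
  For the Lyapunov function \<Sum>_X d_X(k)^2 this is a negative drift whenever the debts are
  large, hence the debts stay bounded, and bounded debts mean that every task receives q^*_X per
  frame on average.\<close>

subsection \<open>Counting executions\<close>

lemma card_interval_filter_Suc:
  assumes "a \<le> b"
  shows "card {s. a \<le> s \<and> s < Suc b \<and> P s}
       = card {s. a \<le> s \<and> s < b \<and> P s} + (if P b then 1 else 0)"
proof -
  have fin: "finite {s. a \<le> s \<and> s < b \<and> P s}"
    by (rule finite_subset[of _ "{..<b}"]) auto
  show ?thesis
  proof (cases "P b")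
    case True
    then have "{s. a \<le> s \<and> s < Suc b \<and> P s} = insert b {s. a \<le> s \<and> s < b \<and> P s}"
      using assms by auto
    then show ?thesis using fin True by simp
  next
    case False
    then have "{s. a \<le> s \<and> s < Suc b \<and> P s} = {s. a \<le> s \<and> s < b \<and> P s}"
      using less_Suc_eq by auto
    then show ?thesis using False by simp
  qed
qed

lemma card_interval_filter_le: "card {s. a \<le> s \<and> s < b \<and> P s} \<le> b - a"
proof -
  have "card {s. a \<le> s \<and> s < b \<and> P s} \<le> card {a..<b}"
    by (rule card_mono) auto
  then show ?thesis by simp
qed

lemma sum_card_executions_le:
  assumes "finite S"
  shows "(\<Sum>X\<in>S. card {s. a \<le> s \<and> s < b \<and> sch s = Some X}) \<le> b - a"
proof -
  have "(\<Sum>X\<in>S. card {s. a \<le> s \<and> s < b \<and> sch s = Some X})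
      = card (\<Union>X\<in>S. {s. a \<le> s \<and> s < b \<and> sch s = Some X})"
    using assms by (intro card_UN_disjoint[symmetric]) auto
  also have "\<dots> \<le> card {a..<b}" by (rule card_mono) auto
  finally show ?thesis by simp
qed

subsection \<open>Rewards of a schedule\<close>

lemma exec_before_less:
  assumes "tau X > 0"
  shows "exec_before tau sch X t < tau X"
proof -
  have "exec_before tau sch X t \<le> t - (t div tau X) * tau X"
    unfolding exec_before_def by (rule card_interval_filter_le)
  also have "\<dots> = t mod tau X" by (simp add: minus_div_mult_eq_mod)
  also have "\<dots> < tau X" using assms by simp
  finally show ?thesis .
qed

lemma slot_reward_nonneg:
  assumes "tau X > 0" and "\<forall>i. 1 \<le> i \<longrightarrow> i \<le> tau X \<longrightarrow> 0 \<le> r X i"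
  shows "0 \<le> slot_reward tau r sch X t"
  using exec_before_less[of tau X sch t] assms unfolding slot_reward_def by auto

lemma slot_reward_le_first:
  assumes "tau X > 0"
    and "\<forall>i j. 1 \<le> i \<longrightarrow> i \<le> j \<longrightarrow> j \<le> tau X \<longrightarrow> r X j \<le> r X i"
    and "\<forall>i. 1 \<le> i \<longrightarrow> i \<le> tau X \<longrightarrow> 0 \<le> r X i"
  shows "slot_reward tau r sch X t \<le> r X 1"
  using exec_before_less[of tau X sch t] assms unfolding slot_reward_def by (auto simp: Suc_le_eq)

lemma period_prefix_reward:
  assumes "tau X = T" and "j \<le> T"
  shows "(\<Sum>s\<in>{k*T..<k*T+j}. slot_reward tau r sch X s)
       = (\<Sum>i < card {s. k*T \<le> s \<and> s < k*T+j \<and> sch s = Some X}. r X (Suc i))"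
  using assms(2)
proof (induction j)
  case 0
  have "{s. k*T \<le> s \<and> s < k*T \<and> sch s = Some X} = {}" by auto
  then show ?case by (simp only: add_0_right card.empty) simp
next
  case (Suc j)
  have "exec_before tau sch X (k*T+j) = card {s. k*T \<le> s \<and> s < k*T+j \<and> sch s = Some X}"
    using Suc.prems assms(1) unfolding exec_before_def by simp
  moreover have "card {s. k*T \<le> s \<and> s < Suc (k*T+j) \<and> sch s = Some X}
     = card {s. k*T \<le> s \<and> s < k*T+j \<and> sch s = Some X} + (if sch (k*T+j) = Some X then 1 else 0)"
    by (rule card_interval_filter_Suc) simp
  ultimately show ?case using Suc by (simp add: slot_reward_def)
qed

lemma frame_reward_Suc:
  assumes "frame_len S tau = T"
  shows "frame_reward S tau r sch X (Suc k) = (\<Sum>s\<in>{k*T..<k*T+T}. slot_reward tau r sch X s)"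
  using assms unfolding frame_reward_def by (simp add: add.commute)

lemma frame_reward_common_period:
  assumes "frame_len S tau = T" and "tau X = T"
  shows "frame_reward S tau r sch X (Suc k)
       = (\<Sum>i < card {s. k*T \<le> s \<and> s < k*T+T \<and> sch s = Some X}. r X (Suc i))"
  using frame_reward_Suc[OF assms(1)] period_prefix_reward[of tau X T] assms(2) by simp

lemma cum_reward_frames:
  assumes "frame_len S tau = T"
  shows "cum_reward tau r sch X (K*T) = (\<Sum>j<K. frame_reward S tau r sch X (Suc j))"
proof (induction K)
  case 0
  then show ?case by (simp add: cum_reward_def)
next
  case (Suc K)
  have "cum_reward tau r sch X (Suc K * T)
      = cum_reward tau r sch X (K*T) + (\<Sum>s\<in>{K*T..<K*T+T}. slot_reward tau r sch X s)"
    unfolding cum_reward_def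
    by (simp add: atLeast0LessThan[symmetric] sum.atLeastLessThan_concat add.commute)
  then show ?case using Suc frame_reward_Suc[OF assms] by simp
qed

lemma cum_reward_mono:
  assumes "\<And>s. 0 \<le> slot_reward tau r sch X s" and "a \<le> b"
  shows "cum_reward tau r sch X a \<le> cum_reward tau r sch X b"
  unfolding cum_reward_def using assms by (intro sum_mono2) auto

lemma frame_reward_bounds:
  assumes "tau X > 0"
    and "\<forall>i j. 1 \<le> i \<longrightarrow> i \<le> j \<longrightarrow> j \<le> tau X \<longrightarrow> r X j \<le> r X i"
    and "\<forall>i. 1 \<le> i \<longrightarrow> i \<le> tau X \<longrightarrow> 0 \<le> r X i"
  shows "0 \<le> frame_reward S tau r sch X k"
    and "frame_reward S tau r sch X k \<le> real (frame_len S tau) * r X 1"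
proof -
  have "0 \<le> r X 1" using assms by auto
  have le: "slot_reward tau r sch X s \<le> r X 1" for s
    using slot_reward_le_first[of tau X r, OF assms] .
  show "0 \<le> frame_reward S tau r sch X k"
    unfolding frame_reward_def using slot_reward_nonneg[of tau X r, OF assms(1,3)] by (simp add: sum_nonneg)
  have "frame_reward S tau r sch X k
      \<le> real (card {(k - 1) * frame_len S tau..<k * frame_len S tau}) * r X 1"
    unfolding frame_reward_def using le by (intro sum_bounded_above) auto
  also have "\<dots> \<le> real (frame_len S tau) * r X 1"
    using \<open>0 \<le> r X 1\<close> by (intro mult_right_mono) (cases k, auto simp: algebra_simps)
  finally show "frame_reward S tau r sch X k \<le> real (frame_len S tau) * r X 1" .
qed

lemma debt_nonneg: "0 \<le> debt S tau r q sch X k"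
  by (cases k) auto

subsection \<open>Optimality of greedy filling\<close>

lemma sum_prefixes_le_by_threshold:
  fixes w :: "'x \<Rightarrow> nat \<Rightarrow> real" and m N :: "'x \<Rightarrow> nat"
  assumes "0 \<le> \<theta>" and "sum m S \<le> sum N S"
    and above: "\<And>X i. X \<in> S \<Longrightarrow> N X < i \<Longrightarrow> i \<le> m X \<Longrightarrow> w X i \<le> \<theta>"
    and below: "\<And>X i. X \<in> S \<Longrightarrow> m X < i \<Longrightarrow> i \<le> N X \<Longrightarrow> \<theta> \<le> w X i"
  shows "(\<Sum>X\<in>S. \<Sum>i<m X. w X (Suc i)) \<le> (\<Sum>X\<in>S. \<Sum>i<N X. w X (Suc i))"
proof -
  have each: "(\<Sum>i<m X. w X (Suc i)) \<le> (\<Sum>i<N X. w X (Suc i)) + \<theta> * (real (m X) - real (N X))"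
    if X: "X \<in> S" for X
  proof (cases "N X \<le> m X")
    case True
    have "(\<Sum>i<m X. w X (Suc i)) = (\<Sum>i<N X. w X (Suc i)) + (\<Sum>i\<in>{N X..<m X}. w X (Suc i))"
      using True by (metis atLeast0LessThan le0 sum.atLeastLessThan_concat)
    also have "(\<Sum>i\<in>{N X..<m X}. w X (Suc i)) \<le> of_nat (card {N X..<m X}) * \<theta>"
      using above X by (intro sum_bounded_above) auto
    finally show ?thesis using True by (simp add: of_nat_diff mult.commute)
  next
    case False
    have "(\<Sum>i<N X. w X (Suc i)) = (\<Sum>i<m X. w X (Suc i)) + (\<Sum>i\<in>{m X..<N X}. w X (Suc i))"
      using False by (metis atLeast0LessThan le0 nat_le_linear sum.atLeastLessThan_concat)
    moreover have "of_nat (card {m X..<N X}) * \<theta> \<le> (\<Sum>i\<in>{m X..<N X}. w X (Suc i))"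
      using below X by (intro sum_bounded_below) auto
    ultimately show ?thesis using False by (simp add: of_nat_diff algebra_simps)
  qed
  have "(\<Sum>X\<in>S. \<Sum>i<m X. w X (Suc i))
      \<le> (\<Sum>X\<in>S. (\<Sum>i<N X. w X (Suc i)) + \<theta> * (real (m X) - real (N X)))"
    using each by (rule sum_mono)
  also have "\<dots> = (\<Sum>X\<in>S. \<Sum>i<N X. w X (Suc i)) + \<theta> * (real (sum m S) - real (sum N S))"
    by (simp add: sum.distrib sum_distrib_left[symmetric] sum_subtractf)
  also have "\<dots> \<le> (\<Sum>X\<in>S. \<Sum>i<N X. w X (Suc i))"
  proof -
    have "real (sum m S) - real (sum N S) \<le> 0" using assms(2) by (simp del: of_nat_sum)
    from mult_nonneg_nonpos[OF assms(1) this] show ?thesis by linarith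
  qed
  finally show ?thesis .
qed

locale greedy_run =
  fixes S :: "'x set" and T :: nat and w :: "'x \<Rightarrow> nat \<Rightarrow> real"
    and Y :: "nat \<Rightarrow> 'x" and n :: "nat \<Rightarrow> 'x \<Rightarrow> nat"
  assumes finite_S: "finite S"
    and pick_in: "\<And>j. j < T \<Longrightarrow> Y j \<in> S"
    and count_0: "\<And>X. n 0 X = 0"
    and count_Suc: "\<And>j X. j < T \<Longrightarrow> n (Suc j) X = (if X = Y j then n j X + 1 else n j X)"
    and pick_max: "\<And>j X. j < T \<Longrightarrow> X \<in> S \<Longrightarrow> w X (n j X + 1) \<le> w (Y j) (n j (Y j) + 1)"
begin

lemma sum_counts: "j \<le> T \<Longrightarrow> (\<Sum>X\<in>S. n j X) = j"
proof (induction j)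
  case 0
  then show ?case using count_0 by simp
next
  case (Suc j)
  then have "(\<Sum>X\<in>S. n (Suc j) X) = (\<Sum>X\<in>S. n j X + (if X = Y j then 1 else 0))"
    using count_Suc by (intro sum.cong) auto
  also have "\<dots> = (\<Sum>X\<in>S. n j X) + 1"
    using finite_S pick_in Suc.prems by (simp add: sum.distrib)
  finally show ?case using Suc by simp
qed

lemma count_mono: "j \<le> j' \<Longrightarrow> j' \<le> T \<Longrightarrow> n j X \<le> n j' X"
proof (induction j' rule: dec_induct)
  case base
  then show ?case by simp
next
  case (step i)
  then show ?case using count_Suc[of i X] by auto
qed

lemma count_le: "j \<le> T \<Longrightarrow> X \<in> S \<Longrightarrow> n j X \<le> j"
  using member_le_sum[OF _ _ finite_S, of X "n j"] sum_counts by simp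

lemma last_pick: "j \<le> T \<Longrightarrow> 1 \<le> n j X \<Longrightarrow> \<exists>j'<j. Y j' = X \<and> n j' X + 1 = n j X"
proof (induction j)
  case 0
  then show ?case using count_0 by simp
next
  case (Suc j)
  then have step: "n (Suc j) X = (if X = Y j then n j X + 1 else n j X)"
    using count_Suc by simp
  show ?case
  proof (cases "X = Y j")
    case True
    then show ?thesis using step by (intro exI[of _ j]) simp
  next
    case False
    then obtain j' where "j' < j" "Y j' = X" "n j' X + 1 = n j X" using Suc step by auto
    then show ?thesis using False step by (intro exI[of _ j']) simp
  qed
qed

lemma greedy_optimal:
  assumes "0 < T"
    and mono: "\<And>X i j. X \<in> S \<Longrightarrow> 1 \<le> i \<Longrightarrow> i \<le> j \<Longrightarrow> j \<le> T \<Longrightarrow> w X j \<le> w X i"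
    and nonneg: "\<And>X i. X \<in> S \<Longrightarrow> 1 \<le> i \<Longrightarrow> i \<le> T \<Longrightarrow> 0 \<le> w X i"
    and m_le: "\<And>X. X \<in> S \<Longrightarrow> m X \<le> T" and sum_m: "sum m S \<le> T"
  shows "(\<Sum>X\<in>S. \<Sum>i<m X. w X (Suc i)) \<le> (\<Sum>X\<in>S. \<Sum>i<n T X. w X (Suc i))"
proof -
  define v where "v j = w (Y j) (n j (Y j) + 1)" for j
  define \<theta> where "\<theta> = Min (v ` {..<T})"
  have fin_v: "finite (v ` {..<T})" "v ` {..<T} \<noteq> {}" using \<open>0 < T\<close> by auto
  obtain j0 where j0: "j0 < T" "\<theta> = v j0"
    using Min_in[OF fin_v] unfolding \<theta>_def by auto
  have \<theta>_le: "j < T \<Longrightarrow> \<theta> \<le> v j" for j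
    unfolding \<theta>_def using fin_v by (intro Min_le) auto
  show ?thesis
  proof (rule sum_prefixes_le_by_threshold)
    have "n j0 (Y j0) + 1 \<le> T" using count_le[of j0 "Y j0"] pick_in j0 by simp
    then show "0 \<le> \<theta>" using nonneg[OF pick_in[OF j0(1)]] j0 unfolding v_def by simp
    show "sum m S \<le> sum (n T) S" using sum_m sum_counts by simp
  next
    fix X i assume X: "X \<in> S" and i: "n T X < i" "i \<le> m X"
    have "w X i \<le> w X (n T X + 1)" using mono[OF X, of "n T X + 1" i] i m_le[OF X] by simp
    also have "\<dots> \<le> w X (n j0 X + 1)"
      using mono[OF X, of "n j0 X + 1" "n T X + 1"] i m_le[OF X] count_mono[of j0 T X] j0 by simp
    also have "\<dots> \<le> \<theta>" unfolding j0 v_def using pick_max j0 X by simp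
    finally show "w X i \<le> \<theta>" .
  next
    fix X i assume X: "X \<in> S" and i: "m X < i" "i \<le> n T X"
    obtain j' where j': "j' < T" "Y j' = X" "n j' X + 1 = n T X"
      using last_pick[of T X] i by auto
    have "\<theta> \<le> w X (n T X)" using \<theta>_le[OF j'(1)] j' unfolding v_def by simp
    also have "\<dots> \<le> w X i" using mono[OF X, of i "n T X"] i count_le[of T X] X by simp
    finally show "\<theta> \<le> w X i" .
  qed
qed

end

lemma greedy_maximizer_frame_greedy_run:
  assumes T: "T > 0" and tau: "\<forall>X\<in>S. tau X = T" and FL: "frame_len S tau = T"
    and "finite S" and gm: "greedy_maximizer S tau r q sch"
  shows "greedy_run S T (\<lambda>X i. debt S tau r q sch X k * r X i) (\<lambda>j. the (sch (k*T+j)))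
           (\<lambda>j X. card {s. k*T \<le> s \<and> s < k*T+j \<and> sch s = Some X})"
    (is "greedy_run S T ?w ?Y ?n")
proof
  have pick: "?Y j \<in> S" "sch (k*T+j) = Some (?Y j)"
    "\<forall>X\<in>S. r X (exec_before tau sch X (k*T+j) + 1) * debt S tau r q sch X ((k*T+j) div frame_len S tau)
       \<le> r (?Y j) (exec_before tau sch (?Y j) (k*T+j) + 1)
          * debt S tau r q sch (?Y j) ((k*T+j) div frame_len S tau)" for j
    using gm[unfolded greedy_maximizer_def, rule_format, of "k*T+j"] by auto
  have exec_before_slot: "exec_before tau sch X (k*T+j) = ?n j X" if "j < T" "X \<in> S" for j X
    using that T tau unfolding exec_before_def by simp
  show "finite S" by fact
  show "?Y j \<in> S" for j by (fact pick(1))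
  show "?n 0 X = 0" for X by simp
  show "?n (Suc j) X = (if X = ?Y j then ?n j X + 1 else ?n j X)" for j X
    using card_interval_filter_Suc[of "k*T" "k*T+j"] pick(2)[of j] by auto
  show "?w X (?n j X + 1) \<le> ?w (?Y j) (?n j (?Y j) + 1)" if "j < T" "X \<in> S" for j X
  proof -
    have "(k*T+j) div frame_len S tau = k" using that T FL by simp
    with pick(3)[of j, rule_format, OF that(2)] show ?thesis
      unfolding exec_before_slot[OF that] exec_before_slot[OF that(1) pick(1)]
      by (simp add: mult.commute)
  qed
qed

lemma greedy_frame_maximizes_weighted_reward:
  assumes fin: "finite S" and T: "T > 0" and tau: "\<forall>X\<in>S. tau X = T"
    and FL: "frame_len S tau = T"
    and mono: "\<forall>X\<in>S. \<forall>i j. 1 \<le> i \<longrightarrow> i \<le> j \<longrightarrow> j \<le> tau X \<longrightarrow> r X j \<le> r X i"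
    and nonneg: "\<forall>X\<in>S. \<forall>i. 1 \<le> i \<longrightarrow> i \<le> tau X \<longrightarrow> 0 \<le> r X i"
    and gm: "greedy_maximizer S tau r q sch"
  shows "(\<Sum>X\<in>S. debt S tau r q sch X k * frame_reward S tau r sch' X (Suc j))
       \<le> (\<Sum>X\<in>S. debt S tau r q sch X k * frame_reward S tau r sch X (Suc k))"
proof -
  define d where "d X = debt S tau r q sch X k" for X
  define m where "m X = card {s. j*T \<le> s \<and> s < j*T+T \<and> sch' s = Some X}" for X
  interpret greedy_run S T "\<lambda>X i. d X * r X i" "\<lambda>j. the (sch (k*T+j))"
    "\<lambda>j X. card {s. k*T \<le> s \<and> s < k*T+j \<and> sch s = Some X}"
    unfolding d_def by (rule greedy_maximizer_frame_greedy_run[OF T tau FL fin gm])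
  have "(\<Sum>X\<in>S. \<Sum>i<m X. d X * r X (Suc i))
      \<le> (\<Sum>X\<in>S. \<Sum>i<card {s. k*T \<le> s \<and> s < k*T+T \<and> sch s = Some X}. d X * r X (Suc i))"
  proof (rule greedy_optimal[OF T])
    show "d X * r X j' \<le> d X * r X i" if "X \<in> S" "1 \<le> i" "i \<le> j'" "j' \<le> T" for X i j'
      using that mono tau debt_nonneg[of S tau r q sch X k] unfolding d_def
      by (intro mult_left_mono) auto
    show "0 \<le> d X * r X i" if "X \<in> S" "1 \<le> i" "i \<le> T" for X i
      using that nonneg tau debt_nonneg[of S tau r q sch X k] unfolding d_def
      by (intro mult_nonneg_nonneg) auto
    show "m X \<le> T" for X unfolding m_def using card_interval_filter_le[of "j*T" "j*T+T"] by simp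
    show "sum m S \<le> T" unfolding m_def using sum_card_executions_le[OF fin, of "j*T" "j*T+T"] by simp
  qed
  then show ?thesis
    using frame_reward_common_period[OF FL] tau unfolding d_def m_def by (simp add: sum_distrib_left)
qed

subsection \<open>Bounded debts\<close>

lemma max0_step_square_le:
  fixes d q g G :: real
  assumes "0 \<le> g" "g \<le> G" "0 \<le> q"
  shows "(max 0 (d + q - g))^2 \<le> d^2 + 2 * (d * q - d * g) + (q + G)^2"
proof -
  have "(max 0 (d + q - g))^2 \<le> (d + q - g)^2" by (auto simp: max_def)
  also have "\<dots> = d^2 + 2 * (d * q - d * g) + (q - g)^2" by (simp add: power2_eq_square algebra_simps)
  also have "(q - g)^2 \<le> (q + G)^2"
    using assms by (intro abs_le_square_iff[THEN iffD1]) linarith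
  finally show ?thesis by simp
qed

lemma bounded_by_negative_drift:
  fixes L c :: "nat \<Rightarrow> real"
  assumes "L 0 \<le> B"
    and "\<And>k. L (Suc k) \<le> L k - c k + C"
    and "\<And>k. 0 \<le> c k"
    and "\<And>k. c k < C \<Longrightarrow> L k \<le> B - C"
  shows "L k \<le> B"
proof (induction k)
  case 0
  then show ?case using assms(1) .
next
  case (Suc k)
  then show ?case using assms(2-4)[of k] by (cases "c k < C") auto
qed

lemma le_weighted_sum_div:
  fixes d q :: "'x \<Rightarrow> real"
  assumes "finite S" and "X \<in> S" and "qm > 0"
    and "\<And>Y. Y \<in> S \<Longrightarrow> 0 \<le> d Y" and "\<And>Y. Y \<in> S \<Longrightarrow> qm \<le> q Y"
  shows "d X \<le> (\<Sum>Y\<in>S. d Y * q Y) / qm"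
proof -
  have "d X * qm \<le> d X * q X" using assms by (simp add: mult_left_mono)
  also have "\<dots> \<le> (\<Sum>Y\<in>S. d Y * q Y)"
  proof (rule member_le_sum)
    show "0 \<le> d Y * q Y" if "Y \<in> S - {X}" for Y
      using assms(3) assms(4,5)[of Y] that by (intro mult_nonneg_nonneg) auto
  qed (use assms in auto)
  finally show ?thesis using \<open>qm > 0\<close> by (simp add: pos_le_divide_eq)
qed

lemma sum_squares_debt_drift:
  fixes d g :: "'x \<Rightarrow> nat \<Rightarrow> real" and q G :: "'x \<Rightarrow> real"
  assumes qpos: "\<forall>X\<in>S. q X > 0"
    and d_Suc: "\<And>X k. d X (Suc k) = max 0 (d X k + q X - g X (Suc k))"
    and g_nonneg: "\<And>X k. X \<in> S \<Longrightarrow> 0 \<le> g X k" and g_le: "\<And>X k. X \<in> S \<Longrightarrow> g X k \<le> G X"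
    and drift: "(\<Sum>X\<in>S. d X k * ((1 + \<delta>) * q X)) \<le> (\<Sum>X\<in>S. d X k * g X (Suc k))"
  shows "(\<Sum>X\<in>S. (d X (Suc k))^2)
       \<le> (\<Sum>X\<in>S. (d X k)^2) - 2 * (\<delta> * (\<Sum>X\<in>S. d X k * q X)) + (\<Sum>X\<in>S. (q X + G X)^2)"
proof -
  have "(\<Sum>X\<in>S. (d X (Suc k))^2)
      \<le> (\<Sum>X\<in>S. (d X k)^2 + 2 * (d X k * q X - d X k * g X (Suc k)) + (q X + G X)^2)"
    unfolding d_Suc using g_nonneg g_le qpos
    by (intro sum_mono max0_step_square_le) (auto simp: less_imp_le)
  also have "\<dots> = (\<Sum>X\<in>S. (d X k)^2)
      + 2 * ((\<Sum>X\<in>S. d X k * q X) - (\<Sum>X\<in>S. d X k * g X (Suc k))) + (\<Sum>X\<in>S. (q X + G X)^2)"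
    by (simp add: sum.distrib sum_subtractf sum_distrib_left)
  also have "(\<Sum>X\<in>S. d X k * ((1 + \<delta>) * q X)) = (\<Sum>X\<in>S. d X k * q X) + \<delta> * (\<Sum>X\<in>S. d X k * q X)"
    by (simp add: sum_distrib_left sum.distrib algebra_simps)
  with drift have "2 * ((\<Sum>X\<in>S. d X k * q X) - (\<Sum>X\<in>S. d X k * g X (Suc k)))
      \<le> - 2 * (\<delta> * (\<Sum>X\<in>S. d X k * q X))"
    by (simp add: algebra_simps)
  finally show ?thesis by simp
qed

lemma bounded_debts_of_drift:
  fixes d g :: "'x \<Rightarrow> nat \<Rightarrow> real" and q G :: "'x \<Rightarrow> real"
  assumes fin: "finite S" and qpos: "\<forall>X\<in>S. q X > 0" and "\<delta> > 0"
    and d_0: "\<And>X. d X 0 = 0"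
    and d_Suc: "\<And>X k. d X (Suc k) = max 0 (d X k + q X - g X (Suc k))"
    and g_nonneg: "\<And>X k. X \<in> S \<Longrightarrow> 0 \<le> g X k" and g_le: "\<And>X k. X \<in> S \<Longrightarrow> g X k \<le> G X"
    and drift: "\<And>k. (\<Sum>X\<in>S. d X k * ((1 + \<delta>) * q X)) \<le> (\<Sum>X\<in>S. d X k * g X (Suc k))"
  obtains E where "\<And>X k. X \<in> S \<Longrightarrow> d X k \<le> E"
proof (cases "S = {}")
  case True
  then show ?thesis using that by blast
next
  case False
  have d_nonneg: "0 \<le> d X k" for X k using d_0 d_Suc by (cases k) auto
  define L where "L k = (\<Sum>X\<in>S. (d X k)^2)" for k
  define P where "P k = (\<Sum>X\<in>S. d X k * q X)" for k
  define C where "C = (\<Sum>X\<in>S. (q X + G X)^2)"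
  define qm where "qm = Min (q ` S)"
  have qm: "qm > 0" "\<And>X. X \<in> S \<Longrightarrow> qm \<le> q X"
    unfolding qm_def using fin False qpos by auto
  define D where "D = C / (2 * \<delta>) / qm"
  have small_drift: "L k \<le> real (card S) * D^2" if "2 * (\<delta> * P k) < C" for k
  proof -
    have "P k / qm \<le> D"
      unfolding D_def using that \<open>\<delta> > 0\<close> qm by (intro divide_right_mono) (auto simp: field_simps)
    moreover have "d X k \<le> P k / qm" if "X \<in> S" for X
      unfolding P_def by (rule le_weighted_sum_div[OF fin that qm(1)]) (auto simp: d_nonneg qm(2))
    ultimately have "d X k \<le> D" if "X \<in> S" for X
      using that by fastforce
    then have "L k \<le> (\<Sum>X\<in>S. D^2)" unfolding L_def using d_nonneg by (intro sum_mono power_mono) auto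
    then show ?thesis by simp
  qed
  have L_bound: "L k \<le> real (card S) * D^2 + C" for k
  proof (rule bounded_by_negative_drift[where c = "\<lambda>k. 2 * (\<delta> * P k)"])
    show "L 0 \<le> real (card S) * D^2 + C" unfolding L_def C_def using d_0 by (simp add: sum_nonneg)
    show "L (Suc k) \<le> L k - 2 * (\<delta> * P k) + C" for k
      unfolding L_def P_def C_def using sum_squares_debt_drift[where d = d and g = g and G = G, OF qpos d_Suc g_nonneg g_le drift] .
    show "0 \<le> 2 * (\<delta> * P k)" for k
      unfolding P_def using \<open>\<delta> > 0\<close> qpos d_nonneg by (simp add: sum_nonneg less_imp_le)
  qed (use small_drift in auto)
  have "d X k \<le> max 1 (real (card S) * D^2 + C)" if "X \<in> S" for X k
  proof -
    have "(d X k)^2 \<le> L k" unfolding L_def using fin that by (intro member_le_sum) auto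
    moreover have "d X k \<le> (d X k)^2" if "1 \<le> d X k"
      using mult_left_mono[OF that, of "d X k"] that by (simp add: power2_eq_square)
    ultimately show ?thesis using L_bound[of k] by fastforce
  qed
  then show ?thesis using that by blast
qed

subsection \<open>From debts to average rewards\<close>

lemma frames_reward_ge_debt_deficit:
  "real k * q X - debt S tau r q sch X k \<le> (\<Sum>j<k. frame_reward S tau r sch X (Suc j))"
proof (induction k)
  case 0
  then show ?case by simp
next
  case (Suc k)
  have "debt S tau r q sch X k + q X - frame_reward S tau r sch X (Suc k) \<le> debt S tau r q sch X (Suc k)"
    by simp
  then show ?case using Suc by (simp add: algebra_simps)
qed

lemma liminf_ge_of_lower_bound:
  fixes f :: "nat \<Rightarrow> real"
  assumes "\<And>t. t > 0 \<Longrightarrow> a - c / real t \<le> f t"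
  shows "ereal a \<le> liminf (\<lambda>t. ereal (f t))"
proof -
  have "(\<lambda>t. c * (1 / real t)) \<longlonglongrightarrow> c * 0" by (intro tendsto_mult tendsto_const lim_inverse_n')
  then have "(\<lambda>t. a - c * (1 / real t)) \<longlonglongrightarrow> a - c * 0" by (intro tendsto_diff tendsto_const)
  then have "(\<lambda>t. ereal (a - c / real t)) \<longlonglongrightarrow> ereal a" by (simp add: tendsto_ereal)
  then have "ereal a = liminf (\<lambda>t. ereal (a - c / real t))"
    by (rule lim_imp_Liminf[OF trivial_limit_sequentially, symmetric])
  also have "\<dots> \<le> liminf (\<lambda>t. ereal (f t))"
    using assms by (intro Liminf_mono eventually_sequentiallyI[of 1]) auto
  finally show ?thesis .
qed

lemma avg_reward_ge_of_bounded_debt: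
  assumes FL: "frame_len S tau = T" and T: "T > 0" and "0 \<le> q X"
    and slot_nonneg: "\<And>s. 0 \<le> slot_reward tau r sch X s"
    and E: "\<And>k. debt S tau r q sch X k \<le> E"
  shows "ereal (q X) \<le> avg_reward S tau r sch X"
  unfolding avg_reward_def FL
proof (rule liminf_ge_of_lower_bound[where c = "(q X + E) * real T"])
  fix t :: nat assume "t > 0"
  define k where "k = t div T"
  have "real k * q X - E \<le> cum_reward tau r sch X (k*T)"
    using frames_reward_ge_debt_deficit[of k q X S tau r sch] E[of k]
    unfolding cum_reward_frames[OF FL] by linarith
  also have "\<dots> \<le> cum_reward tau r sch X t"
    unfolding k_def by (intro cum_reward_mono slot_nonneg) (simp add: div_times_less_eq_dividend)
  finally have frames: "(real k * q X - E) * real T \<le> cum_reward tau r sch X t * real T"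
    using T by (simp add: mult_right_mono)
  have "t < k*T + T" unfolding k_def using T
    by (metis add.commute div_mult_mod_eq mod_less_divisor nat_add_left_cancel_less)
  then have "q X * (real t - real T) \<le> q X * (real k * real T)"
    using \<open>0 \<le> q X\<close> by (intro mult_left_mono) (simp_all flip: of_nat_mult of_nat_add)
  then have "q X * real t - (q X + E) * real T \<le> cum_reward tau r sch X t * real T"
    using frames by (simp add: algebra_simps)
  then have "(q X * real t - (q X + E) * real T) / real t \<le> cum_reward tau r sch X t * real T / real t"
    by (rule divide_right_mono) simp
  then show "q X - (q X + E) * real T / real t \<le> cum_reward tau r sch X t / (real t / real T)"
    using \<open>t > 0\<close> by (simp add: diff_divide_distrib)
qed

subsection \<open>Feasibility and the drift of the greedy debts\<close>

lemma feasible_obtains_schedule: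
  assumes "feasible S tau r q"
  obtains sch where "meets_requirements S tau r q sch"
proof -
  obtain M :: "(nat \<Rightarrow> 'a option) measure" where M: "prob_space M"
    "AE sch in M. valid_schedule S sch \<and> meets_requirements S tau r q sch"
    using assms unfolding feasible_def by auto
  then show ?thesis
    using that eventually_happens'[OF prob_space.ae_filter_bot[OF M(1)] M(2)] by blast
qed

lemma meets_requirements_frame_average:
  assumes fin: "finite S" and FL: "frame_len S tau = T" and T: "T > 0"
    and sch: "meets_requirements S tau r q sch"
    and less: "\<forall>X\<in>S. a X < q X"
  obtains K where "K > 0" "\<And>X. X \<in> S \<Longrightarrow> a X \<le> (\<Sum>j<K. frame_reward S tau r sch X (Suc j)) / real K"
proof -
  have "\<forall>X\<in>S. eventually (\<lambda>t. ereal (a X) < ereal (cum_reward tau r sch X t / (real t / real T))) sequentially"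
  proof
    fix X assume X: "X \<in> S"
    then have "ereal (a X) < ereal (q X)" using less by simp
    also have "\<dots> \<le> avg_reward S tau r sch X" using sch X unfolding meets_requirements_def by blast
    finally have "ereal (a X) < avg_reward S tau r sch X" .
    then show "eventually (\<lambda>t. ereal (a X) < ereal (cum_reward tau r sch X t / (real t / real T))) sequentially"
      unfolding avg_reward_def FL by (rule less_LiminfD)
  qed
  then have "eventually (\<lambda>t. \<forall>X\<in>S. ereal (a X) < ereal (cum_reward tau r sch X t / (real t / real T))) sequentially"
    by (rule eventually_ball_finite[OF fin])
  then obtain N where N: "\<And>t X. t \<ge> N \<Longrightarrow> X \<in> S \<Longrightarrow> a X < cum_reward tau r sch X t / (real t / real T)"
    unfolding eventually_sequentially by auto
  show ?thesis
  proof (rule that[of "Suc N"])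
    fix X assume "X \<in> S"
    have "N \<le> Suc N * T" using mult_le_mono2[of 1 T "Suc N"] T by simp
    then have "a X < cum_reward tau r sch X (Suc N * T) / (real (Suc N * T) / real T)"
      using N \<open>X \<in> S\<close> by blast
    also have "real (Suc N * T) / real T = real (Suc N)" using T by (simp add: field_simps)
    finally show "a X \<le> (\<Sum>j<Suc N. frame_reward S tau r sch X (Suc j)) / real (Suc N)"
      unfolding cum_reward_frames[OF FL] by simp
  qed simp
qed

lemma strictly_feasible_frame_average:
  assumes "finite S" and "frame_len S tau = T" and "T > 0"
    and qpos: "\<forall>X\<in>S. q X > 0" and "strictly_feasible S tau r q"
  obtains \<delta> K sch' where "\<delta> > 0" and "K > 0"
    and "\<And>X. X \<in> S \<Longrightarrow> (1 + \<delta>) * q X \<le> (\<Sum>j<K. frame_reward S tau r sch' X (Suc j)) / real K"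
proof -
  obtain \<epsilon> sch' where "\<epsilon> > 0" and sch': "meets_requirements S tau r (\<lambda>X. (1 + \<epsilon>) * q X) sch'"
    using assms(5) feasible_obtains_schedule unfolding strictly_feasible_def by metis
  then have "\<forall>X\<in>S. (1 + \<epsilon> / 2) * q X < (1 + \<epsilon>) * q X"
    using qpos by (auto intro: mult_strict_right_mono)
  then obtain K where "K > 0" "\<And>X. X \<in> S \<Longrightarrow>
      (1 + \<epsilon> / 2) * q X \<le> (\<Sum>j<K. frame_reward S tau r sch' X (Suc j)) / real K"
    using meets_requirements_frame_average[OF assms(1-3) sch', where a = "\<lambda>X. (1 + \<epsilon> / 2) * q X"]
    by blast
  then show ?thesis using that[of "\<epsilon> / 2" K sch'] \<open>\<epsilon> > 0\<close> by simp
qed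

lemma greedy_debt_drift:
  assumes fin: "finite S" and T: "T > 0" and tau: "\<forall>X\<in>S. tau X = T"
    and FL: "frame_len S tau = T"
    and mono: "\<forall>X\<in>S. \<forall>i j. 1 \<le> i \<longrightarrow> i \<le> j \<longrightarrow> j \<le> tau X \<longrightarrow> r X j \<le> r X i"
    and nonneg: "\<forall>X\<in>S. \<forall>i. 1 \<le> i \<longrightarrow> i \<le> tau X \<longrightarrow> 0 \<le> r X i"
    and gm: "greedy_maximizer S tau r q sch"
    and K: "K > 0" "\<And>X. X \<in> S \<Longrightarrow> a X \<le> (\<Sum>j<K. frame_reward S tau r sch' X (Suc j)) / real K"
  shows "(\<Sum>X\<in>S. debt S tau r q sch X k * a X)
       \<le> (\<Sum>X\<in>S. debt S tau r q sch X k * frame_reward S tau r sch X (Suc k))"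
proof -
  let ?d = "\<lambda>X. debt S tau r q sch X k"
  have "(\<Sum>X\<in>S. ?d X * a X) \<le> (\<Sum>X\<in>S. ?d X * ((\<Sum>j<K. frame_reward S tau r sch' X (Suc j)) / real K))"
    using K(2) debt_nonneg by (intro sum_mono mult_left_mono) auto
  also have "\<dots> = (\<Sum>X\<in>S. \<Sum>j<K. ?d X * frame_reward S tau r sch' X (Suc j)) / real K"
    by (simp add: sum_divide_distrib sum_distrib_left)
  also have "\<dots> = (\<Sum>j<K. \<Sum>X\<in>S. ?d X * frame_reward S tau r sch' X (Suc j)) / real K"
    by (subst sum.swap) (rule refl)
  also have "\<dots> \<le> (\<Sum>j<K. \<Sum>X\<in>S. ?d X * frame_reward S tau r sch X (Suc k)) / real K"
    by (intro divide_right_mono sum_mono greedy_frame_maximizes_weighted_reward[OF assms(1-7)]) auto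
  also have "\<dots> = (\<Sum>X\<in>S. ?d X * frame_reward S tau r sch X (Suc k))" using K(1) by simp
  finally show ?thesis .
qed

theorem theorem8:
  fixes S :: "'x set" and tau :: "'x \<Rightarrow> nat" and r :: "'x \<Rightarrow> nat \<Rightarrow> real"
    and q :: "'x \<Rightarrow> real" and \<tau> :: nat
  assumes "finite S"
    and "\<forall>X\<in>S. tau X > 0"
    and "\<forall>X\<in>S. \<forall>i j. 1 \<le> i \<longrightarrow> i \<le> j \<longrightarrow> j \<le> tau X \<longrightarrow> r X j \<le> r X i"
    and "\<forall>X\<in>S. \<forall>i. 1 \<le> i \<longrightarrow> i \<le> tau X \<longrightarrow> 0 \<le> r X i"
    and "\<forall>X\<in>S. q X > 0"
    and "\<forall>X\<in>S. tau X = \<tau>"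
    and "strictly_feasible S tau r q"
  shows "fulfilled_by_GM S tau r q"
  unfolding fulfilled_by_GM_def
proof (intro allI impI)
  fix sch assume gm: "greedy_maximizer S tau r q sch"
  then obtain X0 where "X0 \<in> S" unfolding greedy_maximizer_def by blast
  then have "tau ` S = {\<tau>}" and T: "\<tau> > 0" using assms(2,6) by force+
  then have FL: "frame_len S tau = \<tau>" unfolding frame_len_def by simp
  obtain \<delta> K sch' where "\<delta> > 0" and K: "K > 0" "\<And>X. X \<in> S \<Longrightarrow>
      (1 + \<delta>) * q X \<le> (\<Sum>j<K. frame_reward S tau r sch' X (Suc j)) / real K"
    using strictly_feasible_frame_average[OF assms(1) FL T assms(5,7)] by blast
  have drift: "(\<Sum>X\<in>S. debt S tau r q sch X k * ((1 + \<delta>) * q X))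
      \<le> (\<Sum>X\<in>S. debt S tau r q sch X k * frame_reward S tau r sch X (Suc k))" for k
    by (rule greedy_debt_drift[OF assms(1) T assms(6) FL assms(3,4) gm K])
  have bounds: "0 \<le> frame_reward S tau r sch X k" "frame_reward S tau r sch X k \<le> real \<tau> * r X 1"
    if "X \<in> S" for X k
    using frame_reward_bounds[of tau X r S sch k] that assms(2-4) FL by auto
  obtain E where E: "\<And>X k. X \<in> S \<Longrightarrow> debt S tau r q sch X k \<le> E"
    using bounded_debts_of_drift[where d = "debt S tau r q sch" and g = "frame_reward S tau r sch",
        OF assms(1,5) \<open>\<delta> > 0\<close> debt.simps bounds drift] by blast
  show "meets_requirements S tau r q sch"
    unfolding meets_requirements_def
  proof
    fix X assume "X \<in> S"
    then show "ereal (q X) \<le> avg_reward S tau r sch X"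
      using avg_reward_ge_of_bounded_debt[OF FL T, of q X r sch E] E slot_reward_nonneg[of tau X r sch]
        assms(2,4,5) by (simp add: less_imp_le)
  qed
qed

end
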